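(* For each $n\geq1$ and all real $\beta,J>0$, $$2(e^{2\beta J}-1)^{|V(\Gamma_n)|-1}e^{-\beta J|E(\Gamma_n)|}\,T_n\!\left(\frac{e^{2\beta J}+1}{e^{2\beta J}-1},e^{2\beta J}\right)=2^{\frac{3^n+3}{2}}\cosh(\beta J)^{3^n}\,\Phi_n(\tanh(\beta J)),$$ where $\Phi_n(z)=z^{3^n/2}\prod_{k=1}^n\phi_k(z)^{3^{n-k}}\,(\phi_{n+1}(z)-1)$ with $\phi_1(z)=\frac{z+1}{z^{1/2}}$, $\phi_2(z)=\frac{z^2+1}{z}$, $\phi_k=\phi_{k-1}^2-3\phi_{k-1}+4$ for $k\ge3$. (The right-hand side is the partition function $Z_n=\sum_{\sigma\in\{\pm1\}^{V(\Gamma_n)}}\exp(\beta J\sum_{\{i,j\}\in E(\Gamma_n)}\sigma_i\sigma_j)$ of the Ising model on $\Gamma_n$.)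
   Context: Graphs are finite; for a graph $G$ and spanning subgraph $A$ (vertex set $V(G)$, edge set $E(A)\subseteq E(G)$), $k(A)$ is its number of components, $r(A)=|V(G)|-k(A)$, $n(A)=|E(A)|-r(A)$, and the Tutte polynomial is $T(G;x,y)=\sum_A(x-1)^{r(G)-r(A)}(y-1)^{n(A)}$. Sierpiński graphs $\Gamma_n$ ($n\ge1$), each with three outmost vertices top, left, right: $\Gamma_1$ is the triangle $K_3$; $\Gamma_{n+1}$ is obtained from three disjoint copies $G_1,G_2,G_3$ of $\Gamma_n$ by identifying left$(G_1)$ with top$(G_2)$, right$(G_1)$ with top$(G_3)$, right$(G_2)$ with left$(G_3)$; its outmost vertices are top$(G_1)$, left$(G_2)$, right$(G_3)$. $|V(\Gamma_n)|=(3^n+3)/2$, $|E(\Gamma_n)|=3^n$, and $T_n(x,y)=T(\Gamma_n;x,y)$. *)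

theory Defs
  imports Complex_Main
begin

definition adj_rel :: "'v set set \<Rightarrow> ('v \<times> 'v) set" where
  "adj_rel A = {(u, v). {u, v} \<in> A}"

definition conn_rel :: "'v set \<Rightarrow> 'v set set \<Rightarrow> ('v \<times> 'v) set" where
  "conn_rel V A = {(u, v). u \<in> V \<and> v \<in> V \<and> (u, v) \<in> (adj_rel A)\<^sup>*}"

definition ncomp :: "'v set \<Rightarrow> 'v set set \<Rightarrow> nat" where
  "ncomp V A = card (V // conn_rel V A)"

definition grank :: "'v set \<Rightarrow> 'v set set \<Rightarrow> nat" where
  "grank V A = card V - ncomp V A"

definition gnullity :: "'v set \<Rightarrow> 'v set set \<Rightarrow> nat" where
  "gnullity V A = card A - grank V A"

definition tutte :: "'v set \<Rightarrow> 'v set set \<Rightarrow> real \<Rightarrow> real \<Rightarrow> real" where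
  "tutte V E x y = (\<Sum>A\<in>Pow E. (x - 1) ^ (grank V E - grank V A) * (y - 1) ^ gnullity V A)"

text \<open>Gamma_n has top (0, s), left (0, 0), right (s, 0) with s = 2^(n-1).
  Gamma_(n+1) is the union of three translated copies of Gamma_n: G1 shifted by (0,s),
  G2 unshifted, G3 shifted by (s,0); their corner points coincide exactly as in the
  identifications left(G1)=top(G2), right(G1)=top(G3), right(G2)=left(G3).\<close>

definition shiftp :: "int \<times> int \<Rightarrow> int \<times> int \<Rightarrow> int \<times> int" where
  "shiftp d p = (fst p + fst d, snd p + snd d)"

fun sier_V :: "nat \<Rightarrow> (int \<times> int) set" where
  "sier_V 0 = {}"
| "sier_V (Suc 0) = {(0, 1), (0, 0), (1, 0)}"
| "sier_V (Suc (Suc n)) =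
     (let s = (2::int) ^ n; V = sier_V (Suc n)
      in shiftp (0, s) ` V \<union> V \<union> shiftp (s, 0) ` V)"

fun sier_E :: "nat \<Rightarrow> (int \<times> int) set set" where
  "sier_E 0 = {}"
| "sier_E (Suc 0) = {{(0, 1), (0, 0)}, {(0, 1), (1, 0)}, {(0, 0), (1, 0)}}"
| "sier_E (Suc (Suc n)) =
     (let s = (2::int) ^ n; E = sier_E (Suc n)
      in (\<lambda>e. shiftp (0, s) ` e) ` E \<union> E \<union> (\<lambda>e. shiftp (s, 0) ` e) ` E)"

definition T_sier :: "nat \<Rightarrow> real \<Rightarrow> real \<Rightarrow> real" where
  "T_sier n x y = tutte (sier_V n) (sier_E n) x y"

fun phi :: "nat \<Rightarrow> real \<Rightarrow> real" where
  "phi 0 z = 0"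
| "phi (Suc 0) z = (z + 1) / sqrt z"
| "phi (Suc (Suc 0)) z = (z ^ 2 + 1) / z"
| "phi (Suc (Suc (Suc k))) z = (phi (Suc (Suc k)) z) ^ 2 - 3 * phi (Suc (Suc k)) z + 4"

definition Phi :: "nat \<Rightarrow> real \<Rightarrow> real" where
  "Phi n z = z powr (real (3 ^ n) / 2) * (\<Prod>k = 1..n. phi k z ^ (3 ^ (n - k))) * (phi (n + 1) z - 1)"

end

theory Submission
  imports Defs
begin

text \<open>
  The left-hand side of the theorem is the Tutte polynomial of Gamma_n evaluated on the
  Ising hyperbola (x - 1)(y - 1) = 2, and the right-hand side is the Ising partition
  function Z_n.  The proof has two independent halves.

  (1) For any connected graph (V, E), the Fortuin--Kasteleyn random-cluster expansion
  turns 2 (e^(2K) - 1)^(|V|-1) e^(-K|E|) T(V,E; coth K, e^(2K)) into the sum over spin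
  configurations of the Boltzmann weights exp(K sum_ij s_i s_j).  The counting fact behind
  it is that a spanning subgraph with k components admits exactly 2^k configurations
  constant on its components.

  (2) For the Sierpinski graphs we compute Z_n by a renormalisation recursion: condition
  on the spins of the three corners.  Gamma_(m+2) is three copies of Gamma_(m+1) glued at
  corners, so the corner partition functions satisfy a cubic recursion whose solution
  involves only two numbers A (equal corners) and B (unequal corners).  An invariant
  relating A - B and A + 3B to cosh K, tanh K and the functions phi_k solves the recursion,
  and summing over the corners gives 2A + 6B = Z_n in the closed form of the theorem.
\<close>

section \<open>Spin configurations and connected components\<close>

definition spins :: "'v set \<Rightarrow> ('v \<Rightarrow> bool) set" where
  "spins V = {\<sigma>. \<forall>x. x \<notin> V \<longrightarrow> \<not> \<sigma> x}"

definition monochrome :: "('v \<Rightarrow> bool) \<Rightarrow> 'v set \<Rightarrow> bool" where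
  "monochrome \<sigma> e = (\<forall>u\<in>e. \<forall>v\<in>e. \<sigma> u = \<sigma> v)"

definition cluster_spins :: "'v set \<Rightarrow> 'v set set \<Rightarrow> ('v \<Rightarrow> bool) set" where
  "cluster_spins V A = {\<sigma>\<in>spins V. \<forall>e\<in>A. monochrome \<sigma> e}"

definition graph_edges :: "'v set \<Rightarrow> 'v set set \<Rightarrow> bool" where
  "graph_edges V A = (\<forall>e\<in>A. \<exists>u v. e = {u, v} \<and> u \<in> V \<and> v \<in> V)"

lemma spins_off: "\<sigma> \<in> spins V \<Longrightarrow> x \<notin> V \<Longrightarrow> \<not> \<sigma> x"
  unfolding spins_def by blast

lemma monochrome_pair: "monochrome \<sigma> {u, v} = (\<sigma> u = \<sigma> v)"
  unfolding monochrome_def by auto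

lemma monochrome_image: "monochrome \<sigma> (f ` e) = monochrome (\<sigma> \<circ> f) e"
  unfolding monochrome_def by auto

lemma graph_edges_mono: "graph_edges V B \<Longrightarrow> A \<subseteq> B \<Longrightarrow> graph_edges V A"
  unfolding graph_edges_def by blast

lemma spins_bij_Pow: "bij_betw (\<lambda>S x. x \<in> S) (Pow V) (spins V)"
proof -
  have "\<sigma> \<in> (\<lambda>S x. x \<in> S) ` Pow V" if "\<sigma> \<in> spins V" for \<sigma>
    using that by (intro image_eqI[of _ _ "{x. \<sigma> x}"]) (auto simp: spins_def)
  then show ?thesis
    unfolding bij_betw_def inj_on_def by (auto simp: fun_eq_iff spins_def)
qed

lemma card_spins: "finite V \<Longrightarrow> card (spins V) = 2 ^ card V"
  using bij_betw_same_card[OF spins_bij_Pow, of V] by (simp add: card_Pow)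

lemma finite_spins: "finite V \<Longrightarrow> finite (spins V)"
  using bij_betw_finite[OF spins_bij_Pow, of V] by simp

lemma finite_cluster_spins: "finite V \<Longrightarrow> finite (cluster_spins V A)"
  by (rule finite_subset[OF _ finite_spins]) (auto simp: cluster_spins_def)

lemma cluster_spins_anti: "A \<subseteq> B \<Longrightarrow> cluster_spins V B \<subseteq> cluster_spins V A"
  by (auto simp: cluster_spins_def)

lemma conn_rel_equiv: "equiv V (conn_rel V A)"
proof -
  have "sym (adj_rel A)"
    unfolding sym_def adj_rel_def by (auto simp: insert_commute)
  then have "(y, x) \<in> (adj_rel A)\<^sup>*" if "(x, y) \<in> (adj_rel A)\<^sup>*" for x y
    using that sym_rtrancl by (metis symD)
  then show ?thesis
    unfolding equiv_def refl_on_def sym_def trans_def conn_rel_def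
    by (auto intro: rtrancl_trans)
qed

lemma cluster_spins_path:
  assumes "\<sigma> \<in> cluster_spins V A" "(x, y) \<in> (adj_rel A)\<^sup>*"
  shows "\<sigma> x = \<sigma> y"
  using assms(2)
proof (induction rule: rtrancl_induct)
  case (step y z)
  then have "{y, z} \<in> A" by (simp add: adj_rel_def)
  with assms(1) have "\<sigma> y = \<sigma> z" by (auto simp: cluster_spins_def monochrome_pair)
  with step.IH show ?case by simp
qed simp

lemma inj_on_Union_quotient:
  assumes eq: "equiv V R"
  shows "inj_on Union (Pow (V // R))"
proof (rule inj_onI)
  fix S1 S2 assume S: "S1 \<in> Pow (V // R)" "S2 \<in> Pow (V // R)" and un: "\<Union>S1 = \<Union>S2"
  have cover: "C \<in> T2" if "C \<in> T1" "T1 \<subseteq> V // R" "T2 \<subseteq> V // R" "\<Union>T1 = \<Union>T2" for C T1 T2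
  proof -
    have C: "C \<in> V // R" using that(1,2) by blast
    then obtain x where "x \<in> V" "C = R `` {x}" by (rule quotientE)
    then have "x \<in> C" using equiv_class_self[OF eq] by simp
    then have "x \<in> \<Union>T2" using that(1,4) by blast
    then obtain C' where C': "C' \<in> T2" "x \<in> C'" by (rule UnionE)
    have "C' \<in> V // R" using C'(1) that(3) by blast
    then have "C = C'" using quotient_disj[OF eq C] \<open>x \<in> C\<close> C'(2) by blast
    with C' show ?thesis by simp
  qed
  have "S1 \<subseteq> S2" using cover[of _ S1 S2] S un by blast
  moreover have "S2 \<subseteq> S1" using cover[of _ S2 S1] S un by blast
  ultimately show "S1 = S2" by (rule subset_antisym)
qed

text \<open>A configuration constant on components is determined by the set of components
  carrying spin True; this gives the bijection behind the count 2^k(A).\<close>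
lemma cluster_spins_bij:
  assumes "graph_edges V A"
  shows "bij_betw (\<lambda>S x. x \<in> \<Union>S) (Pow (V // conn_rel V A)) (cluster_spins V A)"
proof -
  let ?R = "conn_rel V A" and ?Q = "V // conn_rel V A"
  have eq: "equiv V ?R" by (rule conn_rel_equiv)
  have inj: "inj_on (\<lambda>S x. x \<in> \<Union>S) (Pow ?Q)"
  proof (rule inj_onI)
    fix S1 S2 assume S: "S1 \<in> Pow ?Q" "S2 \<in> Pow ?Q"
      and "(\<lambda>x. x \<in> \<Union>S1) = (\<lambda>x. x \<in> \<Union>S2)"
    then have "\<Union>S1 = \<Union>S2" by (simp add: fun_eq_iff set_eq_iff)
    then show "S1 = S2" by (rule inj_onD[OF inj_on_Union_quotient[OF eq] _ S])
  qed
  have "(\<lambda>S x. x \<in> \<Union>S) ` Pow ?Q = cluster_spins V A"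
  proof
    show "(\<lambda>S x. x \<in> \<Union>S) ` Pow ?Q \<subseteq> cluster_spins V A"
    proof clarify
      fix S assume S: "S \<subseteq> ?Q"
      have "monochrome (\<lambda>x. x \<in> \<Union>S) e" if e: "e \<in> A" for e
      proof -
        obtain u v where uv: "e = {u, v}" "u \<in> V" "v \<in> V"
          using assms e unfolding graph_edges_def by blast
        then have uv_R: "(u, v) \<in> ?R" using e by (auto simp: conn_rel_def adj_rel_def)
        have vu_R: "(v, u) \<in> ?R" using eq uv_R unfolding equiv_def by (blast dest: symD)
        have "(u \<in> C) = (v \<in> C)" if "C \<in> ?Q" for C
          using in_quotient_imp_closed[OF eq that _ uv_R] in_quotient_imp_closed[OF eq that _ vu_R]
          by blast
        then show ?thesis using S uv by (auto simp: monochrome_pair)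
      qed
      moreover have "\<Union>S \<subseteq> V" using S Union_quotient[OF eq] by blast
      then have "(\<lambda>x. x \<in> \<Union>S) \<in> spins V" by (auto simp: spins_def)
      ultimately show "(\<lambda>x. x \<in> \<Union>S) \<in> cluster_spins V A" by (simp add: cluster_spins_def)
    qed
    show "cluster_spins V A \<subseteq> (\<lambda>S x. x \<in> \<Union>S) ` Pow ?Q"
    proof
      fix \<sigma> assume \<sigma>: "\<sigma> \<in> cluster_spins V A"
      let ?S = "{C\<in>?Q. \<exists>y\<in>C. \<sigma> y}"
      have repr: "\<sigma> x = (x \<in> \<Union>?S)" for x
      proof
        assume "\<sigma> x"
        then have "x \<in> V" using \<sigma> by (auto simp: cluster_spins_def spins_def)
        then have "?R `` {x} \<in> ?S" "x \<in> ?R `` {x}"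
          using \<open>\<sigma> x\<close> equiv_class_self[OF eq] quotientI[of x V ?R] by auto
        then show "x \<in> \<Union>?S" by (rule UnionI)
      next
        assume "x \<in> \<Union>?S"
        then obtain C y where C: "C \<in> ?Q" "x \<in> C" "y \<in> C" "\<sigma> y" by blast
        then have "(y, x) \<in> ?R" using quotient_eq_iff[OF eq C(1) C(1) C(3) C(2)] by simp
        then show "\<sigma> x" using cluster_spins_path[OF \<sigma>] C(4) by (auto simp: conn_rel_def)
      qed
      have "\<sigma> = (\<lambda>x. x \<in> \<Union>?S)" by (rule ext, rule repr)
      then show "\<sigma> \<in> (\<lambda>S x. x \<in> \<Union>S) ` Pow ?Q" by (rule image_eqI) auto
    qed
  qed
  with inj show ?thesis unfolding bij_betw_def by blast
qed

lemma card_cluster_spins: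
  assumes "finite V" "graph_edges V A"
  shows "card (cluster_spins V A) = 2 ^ ncomp V A"
proof -
  have "finite (V // conn_rel V A)"
    using assms(1) conn_rel_equiv by (metis equiv_type finite_quotient)
  then show ?thesis
    using bij_betw_same_card[OF cluster_spins_bij[OF assms(2)]]
    by (simp add: card_Pow ncomp_def)
qed

text \<open>Elementary bounds on the number of components, obtained by comparing the
  sizes of the sets of cluster configurations.\<close>

lemma ncomp_le_card:
  assumes "finite V" "graph_edges V A"
  shows "ncomp V A \<le> card V"
proof -
  have "card (cluster_spins V A) \<le> card (spins V)"
    using assms(1) by (intro card_mono finite_spins) (auto simp: cluster_spins_def)
  then show ?thesis using card_cluster_spins[OF assms] card_spins[OF assms(1)] by simp
qed

lemma ncomp_anti:
  assumes "finite V" "graph_edges V B" "A \<subseteq> B"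
  shows "ncomp V B \<le> ncomp V A"
proof -
  have "card (cluster_spins V B) \<le> card (cluster_spins V A)"
    using assms by (intro card_mono finite_cluster_spins cluster_spins_anti)
  then show ?thesis
    using card_cluster_spins[OF assms(1,2)] card_cluster_spins[OF assms(1) graph_edges_mono[OF assms(2,3)]]
    by simp
qed

lemma ncomp_empty: "finite V \<Longrightarrow> ncomp V {} = card V"
  using card_cluster_spins[of V "{}"] card_spins[of V]
  by (simp add: graph_edges_def cluster_spins_def)

lemma reach_in_V:
  assumes "(u, x) \<in> (adj_rel A)\<^sup>*" "u \<in> V" "graph_edges V A"
  shows "x \<in> V"
  using assms(1)
proof (induction rule: rtrancl_induct)
  case (step y z)
  then have "{y, z} \<in> A" by (simp add: adj_rel_def)
  with assms(3) step.IH show ?case by (auto simp: graph_edges_def doubleton_eq_iff)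
qed (rule assms(2))

text \<open>Flipping all spins in the A-component of u repairs a cluster configuration
  on which the new edge {u, v} is not monochrome.\<close>
definition flip_component :: "'v set set \<Rightarrow> 'v \<Rightarrow> ('v \<Rightarrow> bool) \<Rightarrow> 'v \<Rightarrow> bool" where
  "flip_component A u \<sigma> x = (if (u, x) \<in> (adj_rel A)\<^sup>* then \<not> \<sigma> x else \<sigma> x)"

lemma flip_component_inj: "inj (flip_component A u)"
  by (rule injI) (auto simp: fun_eq_iff flip_component_def split: if_splits)

lemma flip_component_cluster:
  assumes \<sigma>: "\<sigma> \<in> cluster_spins V A" and ok: "graph_edges V A"
    and uv: "u \<in> V" "\<sigma> u \<noteq> \<sigma> v"
  shows "flip_component A u \<sigma> \<in> cluster_spins V (insert {u, v} A)"
proof -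
  let ?\<tau> = "flip_component A u \<sigma>"
  have "?\<tau> \<in> spins V"
    using reach_in_V[OF _ uv(1) ok] \<sigma>
    by (auto simp: spins_def flip_component_def cluster_spins_def)
  moreover have "monochrome ?\<tau> e" if e: "e \<in> A" for e
  proof -
    obtain a b where ab: "e = {a, b}" using ok e unfolding graph_edges_def by blast
    then have "(a, b) \<in> adj_rel A" "(b, a) \<in> adj_rel A"
      using e by (auto simp: adj_rel_def insert_commute)
    then have "(u, a) \<in> (adj_rel A)\<^sup>* \<longleftrightarrow> (u, b) \<in> (adj_rel A)\<^sup>*"
      by (meson rtrancl.rtrancl_into_rtrancl)
    moreover have "\<sigma> a = \<sigma> b"
      using \<sigma> e ab by (auto simp: cluster_spins_def monochrome_pair)
    ultimately show ?thesis unfolding ab monochrome_pair flip_component_def by simp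
  qed
  moreover have "(u, v) \<notin> (adj_rel A)\<^sup>*"
    using cluster_spins_path[OF \<sigma>] uv(2) by blast
  then have "monochrome ?\<tau> {u, v}"
    using uv(2) by (simp add: monochrome_pair flip_component_def)
  ultimately show ?thesis by (simp add: cluster_spins_def)
qed

lemma ncomp_insert:
  assumes fin: "finite V" and ok: "graph_edges V (insert e A)"
  shows "ncomp V A \<le> ncomp V (insert e A) + 1"
proof -
  have okA: "graph_edges V A" using ok by (rule graph_edges_mono) (rule subset_insertI)
  obtain u v where e: "e = {u, v}" "u \<in> V" using ok unfolding graph_edges_def by blast
  let ?new = "cluster_spins V (insert e A)"
  let ?bad = "{\<sigma>\<in>cluster_spins V A. \<sigma> u \<noteq> \<sigma> v}"
  have fin_new: "finite ?new" and fin_bad: "finite ?bad"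
    using finite_cluster_spins[OF fin] by simp_all
  have split: "cluster_spins V A \<subseteq> ?new \<union> ?bad"
    by (auto simp: cluster_spins_def e monochrome_pair)
  have "flip_component A u ` ?bad \<subseteq> ?new"
  proof clarify
    fix \<sigma> assume "\<sigma> \<in> cluster_spins V A" "\<sigma> u \<noteq> \<sigma> v"
    from flip_component_cluster[OF this(1) okA e(2) this(2)]
    show "flip_component A u \<sigma> \<in> ?new" by (simp add: e(1))
  qed
  then have "card ?bad \<le> card ?new"
    using card_inj_on_le[OF inj_on_subset[OF flip_component_inj subset_UNIV] _ fin_new] by blast
  moreover have "card (cluster_spins V A) \<le> card ?new + card ?bad"
    using card_mono[OF finite_UnI[OF fin_new fin_bad] split] card_Un_le[of ?new ?bad]
    by (rule order_trans)
  ultimately have "(2::nat) ^ ncomp V A \<le> 2 ^ Suc (ncomp V (insert e A))"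
    using card_cluster_spins[OF fin ok] card_cluster_spins[OF fin okA] by simp
  then show ?thesis by (simp only: power_increasing_iff one_less_numeral_iff semiring_norm(76))
qed

lemma card_le_edges_plus_ncomp:
  assumes "finite A" "finite V" "graph_edges V A"
  shows "card V \<le> card A + ncomp V A"
  using assms
proof (induction A rule: finite_induct)
  case empty
  then show ?case by (simp add: ncomp_empty)
next
  case (insert e A)
  have "graph_edges V A" using insert.prems(2) by (rule graph_edges_mono) (rule subset_insertI)
  then have "card V \<le> card A + ncomp V A" using insert.IH insert.prems(1) by simp
  moreover have "ncomp V A \<le> ncomp V (insert e A) + 1"
    by (rule ncomp_insert[OF insert.prems])
  ultimately show ?case using insert.hyps by simp
qed

section \<open>From the Tutte polynomial to the Ising partition function\<close>

text \<open>On the hyperbola (x - 1)(y - 1) = 2 the Tutte polynomial of a connected graph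
  is the random-cluster sum with cluster weight 2 (Fortuin--Kasteleyn).\<close>
lemma tutte_random_cluster:
  assumes fV: "finite V" and fE: "finite E" and ok: "graph_edges V E"
    and conn: "ncomp V E = 1" and w: "w \<noteq> 0"
  shows "2 * w ^ (card V - 1) * tutte V E (1 + 2 / w) (1 + w)
       = (\<Sum>A\<in>Pow E. 2 ^ ncomp V A * w ^ card A)"
  unfolding tutte_def sum_distrib_left
proof (rule sum.cong[OF refl])
  fix A assume "A \<in> Pow E"
  then have AE: "A \<subseteq> E" by simp
  have okA: "graph_edges V A" using ok AE by (rule graph_edges_mono)
  define k where "k = ncomp V A"
  have k1: "1 \<le> k" unfolding k_def using ncomp_anti[OF fV ok AE] conn by simp
  have kV: "k \<le> card V" unfolding k_def by (rule ncomp_le_card[OF fV okA])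
  have forest: "card V \<le> card A + k"
    unfolding k_def using finite_subset[OF AE fE] fV okA by (rule card_le_edges_plus_ncomp)
  have rank: "grank V E - grank V A = k - 1"
    unfolding grank_def conn k_def[symmetric] using k1 kV by simp
  have nullity: "gnullity V A = card A + k - card V"
    unfolding gnullity_def grank_def k_def[symmetric] using kV forest by simp
  have "(card V - 1) + (card A + k - card V) = (k - 1) + card A"
    using k1 kV forest by simp
  then have "w ^ (card V - 1) * w ^ (card A + k - card V) = w ^ (k - 1) * w ^ card A"
    by (simp only: power_add[symmetric])
  moreover have "(2::real) ^ k = 2 * 2 ^ (k - 1)" using k1 by (cases k) auto
  ultimately show "2 * w ^ (card V - 1) * ((1 + 2 / w - 1) ^ (grank V E - grank V A)
        * (1 + w - 1) ^ gnullity V A) = 2 ^ ncomp V A * w ^ card A"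
    unfolding rank nullity k_def[symmetric] using w by (simp add: power_divide field_simps)
qed

text \<open>Expanding the product over edges: each cluster configuration contributes
  w^|A| for every edge set A it makes monochrome.\<close>
lemma random_cluster_spin_expansion:
  assumes fV: "finite V" and fE: "finite E" and ok: "graph_edges V E"
  shows "(\<Sum>A\<in>Pow E. 2 ^ ncomp V A * w ^ card A)
       = (\<Sum>\<sigma>\<in>spins V. \<Prod>e\<in>E. 1 + (if monochrome \<sigma> e then w else (0::real)))"
proof -
  have "(\<Prod>e\<in>E. 1 + (if monochrome \<sigma> e then w else 0))
      = (\<Sum>A\<in>Pow E. if \<forall>e\<in>A. monochrome \<sigma> e then w ^ card A else 0)" for \<sigma>
  proof -
    have "(\<Prod>e\<in>A. if monochrome \<sigma> e then w else 0)
        = (if \<forall>e\<in>A. monochrome \<sigma> e then w ^ card A else 0)" if "finite A" for A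
      using that by (induction A rule: finite_induct) auto
    then show ?thesis
      using prod_add[OF fE, of "\<lambda>e. if monochrome \<sigma> e then w else 0" "\<lambda>_. 1"]
      by (simp add: add.commute finite_subset[OF _ fE])
  qed
  then have "(\<Sum>\<sigma>\<in>spins V. \<Prod>e\<in>E. 1 + (if monochrome \<sigma> e then w else 0))
      = (\<Sum>A\<in>Pow E. \<Sum>\<sigma>\<in>spins V. if \<forall>e\<in>A. monochrome \<sigma> e then w ^ card A else 0)"
    by (simp add: sum.swap[of _ "spins V"])
  also have "\<dots> = (\<Sum>A\<in>Pow E. real (card (cluster_spins V A)) * w ^ card A)"
    by (simp add: sum.If_cases[OF finite_spins[OF fV]] cluster_spins_def Collect_conv_if Int_def)
  also have "\<dots> = (\<Sum>A\<in>Pow E. 2 ^ ncomp V A * w ^ card A)"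
    using card_cluster_spins[OF fV graph_edges_mono[OF ok]] by (intro sum.cong) auto
  finally show ?thesis by simp
qed

text \<open>Boltzmann weight exp(K * sum over edges ij of s_i s_j) of a spin configuration,
  written as a product of edge factors e^K (equal spins) and e^-K (opposite spins).\<close>
definition edge_weight :: "real \<Rightarrow> ('v \<Rightarrow> bool) \<Rightarrow> 'v set \<Rightarrow> real" where
  "edge_weight K \<sigma> e = (if monochrome \<sigma> e then exp K else exp (- K))"

definition ising_weight :: "real \<Rightarrow> 'v set set \<Rightarrow> ('v \<Rightarrow> bool) \<Rightarrow> real" where
  "ising_weight K E \<sigma> = (\<Prod>e\<in>E. edge_weight K \<sigma> e)"

lemma ising_weight_expand:
  assumes "finite E"
  shows "exp (- K * real (card E)) * (\<Prod>e\<in>E. 1 + (if monochrome \<sigma> e then exp (2 * K) - 1 else 0))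
       = ising_weight K E \<sigma>"
proof -
  have factor: "exp (- K) * (1 + (if monochrome \<sigma> e then exp (2 * K) - 1 else 0))
      = edge_weight K \<sigma> e" for e
    by (simp add: edge_weight_def flip: exp_add)
  have "exp (- K * real (card E)) = (\<Prod>e\<in>E. exp (- K))"
    by (simp add: exp_of_nat_mult[symmetric] mult.commute)
  then have "exp (- K * real (card E)) * (\<Prod>e\<in>E. 1 + (if monochrome \<sigma> e then exp (2 * K) - 1 else 0))
      = (\<Prod>e\<in>E. exp (- K) * (1 + (if monochrome \<sigma> e then exp (2 * K) - 1 else 0)))"
    by (simp only: prod.distrib)
  then show ?thesis unfolding factor ising_weight_def .
qed

theorem tutte_ising:
  assumes "finite V" "finite E" "graph_edges V E" "ncomp V E = 1" "K \<noteq> 0"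
  shows "2 * (exp (2 * K) - 1) ^ (card V - 1) * exp (- K * real (card E))
           * tutte V E ((exp (2 * K) + 1) / (exp (2 * K) - 1)) (exp (2 * K))
         = (\<Sum>\<sigma>\<in>spins V. ising_weight K E \<sigma>)"
proof -
  define w where "w = exp (2 * K) - 1"
  have w: "w \<noteq> 0" using assms(5) by (simp add: w_def)
  have xy: "1 + 2 / w = (exp (2 * K) + 1) / (exp (2 * K) - 1)" "1 + w = exp (2 * K)"
    using w by (simp_all add: w_def field_simps)
  have rc: "2 * (exp (2 * K) - 1) ^ (card V - 1)
        * tutte V E ((exp (2 * K) + 1) / (exp (2 * K) - 1)) (exp (2 * K))
      = (\<Sum>\<sigma>\<in>spins V. \<Prod>e\<in>E. 1 + (if monochrome \<sigma> e then exp (2 * K) - 1 else 0))"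
    using tutte_random_cluster[OF assms(1-4) w, unfolded xy]
      random_cluster_spin_expansion[OF assms(1-3), of w]
    unfolding w_def by simp
  have "2 * (exp (2 * K) - 1) ^ (card V - 1) * exp (- K * real (card E))
          * tutte V E ((exp (2 * K) + 1) / (exp (2 * K) - 1)) (exp (2 * K))
      = exp (- K * real (card E)) * (2 * (exp (2 * K) - 1) ^ (card V - 1)
          * tutte V E ((exp (2 * K) + 1) / (exp (2 * K) - 1)) (exp (2 * K)))"
    by (simp only: mult_ac)
  also have "\<dots> = (\<Sum>\<sigma>\<in>spins V. exp (- K * real (card E))
      * (\<Prod>e\<in>E. 1 + (if monochrome \<sigma> e then exp (2 * K) - 1 else 0)))"
    unfolding rc by (rule sum_distrib_left)
  also have "\<dots> = (\<Sum>\<sigma>\<in>spins V. ising_weight K E \<sigma>)"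
    using ising_weight_expand[OF assms(2)] by simp
  finally show ?thesis .
qed

section \<open>Geometry of the Sierpinski graphs\<close>

text \<open>SV m and SE m are the vertices and edges of Gamma_(m+1), a triangle of side 2^m
  with corners top (0, 2^m), left (0, 0) and right (2^m, 0).\<close>
abbreviation SV :: "nat \<Rightarrow> (int \<times> int) set" where "SV m \<equiv> sier_V (Suc m)"
abbreviation SE :: "nat \<Rightarrow> (int \<times> int) set set" where "SE m \<equiv> sier_E (Suc m)"
abbreviation up :: "nat \<Rightarrow> int \<times> int \<Rightarrow> int \<times> int" where "up m \<equiv> shiftp (0, 2 ^ m)"
abbreviation right :: "nat \<Rightarrow> int \<times> int \<Rightarrow> int \<times> int" where "right m \<equiv> shiftp (2 ^ m, 0)"

lemma SV_Suc: "SV (Suc m) = up m ` SV m \<union> SV m \<union> right m ` SV m"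
  by (simp add: Let_def)

lemma SE_Suc: "SE (Suc m) = (\<lambda>e. up m ` e) ` SE m \<union> SE m \<union> (\<lambda>e. right m ` e) ` SE m"
  by (simp add: Let_def)

lemma SV_SucE:
  assumes "p \<in> SV (Suc m)"
  obtains (up) q where "q \<in> SV m" "p = up m q" | (mid) "p \<in> SV m"
    | (right) q where "q \<in> SV m" "p = right m q"
  using assms unfolding SV_Suc by blast

lemma SE_SucE:
  assumes "e \<in> SE (Suc m)"
  obtains (up) e' where "e' \<in> SE m" "e = up m ` e'" | (mid) "e \<in> SE m"
    | (right) e' where "e' \<in> SE m" "e = right m ` e'"
  using assms unfolding SE_Suc by blast

lemma shiftp_pair [simp]: "shiftp (a, b) (x, y) = (x + a, y + b)"
  by (simp add: shiftp_def)

lemma inj_shiftp: "inj (shiftp d)"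
  by (auto simp: inj_def shiftp_def prod_eq_iff)

lemma finite_SV_SE: "finite (SV m) \<and> finite (SE m)"
  by (induction m) (auto simp: Let_def)

lemma SV_in_triangle: "p \<in> SV m \<Longrightarrow> 0 \<le> fst p \<and> 0 \<le> snd p \<and> fst p + snd p \<le> 2 ^ m"
proof (induction m arbitrary: p)
  case (Suc m)
  from Suc.prems show ?case
  proof (cases rule: SV_SucE)
    case (up q) then show ?thesis using Suc.IH[of q] by (cases q) auto
  next
    case mid then show ?thesis using Suc.IH[of p] by (cases p) auto
  next
    case (right q) then show ?thesis using Suc.IH[of q] by (cases q) auto
  qed
qed auto

lemma SV_corners: "(0, 2 ^ m) \<in> SV m" "(0, 0) \<in> SV m" "(2 ^ m, 0) \<in> SV m"
proof (induction m)
  case (Suc m)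
  have "(0, 2 ^ Suc m) = up m (0, 2 ^ m)" "(2 ^ Suc m, 0) = right m (2 ^ m, 0)" by simp_all
  with Suc show "(0, 2 ^ Suc m) \<in> SV (Suc m)" "(0, 0) \<in> SV (Suc m)" "(2 ^ Suc m, 0) \<in> SV (Suc m)"
    unfolding SV_Suc by (metis UnI1 UnI2 image_eqI)+
qed simp_all

lemma SE_pair: "e \<in> SE m \<Longrightarrow> \<exists>u v. e = {u, v} \<and> u \<noteq> v \<and> u \<in> SV m \<and> v \<in> SV m"
proof (induction m arbitrary: e)
  case 0
  then consider "e = {(0, 1), (0, 0)}" | "e = {(0, 1), (1, 0)}" | "e = {(0, 0), (1, 0)}" by auto
  then show ?case by cases (metis (no_types) insertCI prod.inject zero_neq_one sier_V.simps(2))+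
next
  case (Suc m)
  have copy: "\<exists>u v. f ` e = {u, v} \<and> u \<noteq> v \<and> u \<in> SV (Suc m) \<and> v \<in> SV (Suc m)"
    if e: "e \<in> SE m" and f: "f \<in> {up m, \<lambda>x. x, right m}" for e f
  proof -
    obtain u v where uv: "e = {u, v}" "u \<noteq> v" "u \<in> SV m" "v \<in> SV m" using Suc.IH[OF e] by blast
    have "inj f" using f inj_shiftp by auto
    then have "f u \<noteq> f v" using uv(2) by (auto dest: injD)
    moreover have "f u \<in> SV (Suc m)" "f v \<in> SV (Suc m)" using f uv(3,4) unfolding SV_Suc by auto
    ultimately show ?thesis using uv(1) by blast
  qed
  from Suc.prems show ?case
  proof (cases rule: SE_SucE)
    case (up e') then show ?thesis using copy[of e' "up m"] by simp
  next
    case mid then show ?thesis using copy[of e "\<lambda>x. x"] by simp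
  next
    case (right e') then show ?thesis using copy[of e' "right m"] by simp
  qed
qed

lemma graph_edges_SE: "graph_edges (SV m) (SE m)"
  unfolding graph_edges_def using SE_pair by blast

lemma SE_subset: "e \<in> SE m \<Longrightarrow> e \<subseteq> SV m"
  using SE_pair by blast

lemma overlap_up_mid: "p \<in> SV m \<Longrightarrow> q \<in> SV m \<Longrightarrow> up m p = q \<Longrightarrow> p = (0, 0) \<and> q = (0, 2 ^ m)"
  using SV_in_triangle[of p m] SV_in_triangle[of q m] by (cases p; cases q) auto

lemma overlap_right_up:
  "p \<in> SV m \<Longrightarrow> q \<in> SV m \<Longrightarrow> right m p = up m q \<Longrightarrow> p = (0, 2 ^ m) \<and> q = (2 ^ m, 0)"
  using SV_in_triangle[of p m] SV_in_triangle[of q m] by (cases p; cases q) auto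

lemma overlap_right_mid:
  "p \<in> SV m \<Longrightarrow> q \<in> SV m \<Longrightarrow> right m p = q \<Longrightarrow> p = (0, 0) \<and> q = (2 ^ m, 0)"
  using SV_in_triangle[of p m] SV_in_triangle[of q m] by (cases p; cases q) auto

text \<open>Hence the edge sets of the copies are pairwise disjoint: an edge has two distinct
  ends, but two copies share only one vertex.\<close>
lemma edge_images_disjoint:
  assumes "\<And>p q. p \<in> SV m \<Longrightarrow> q \<in> SV m \<Longrightarrow> f p = g q \<Longrightarrow> q = shared"
  shows "(\<lambda>e. f ` e) ` SE m \<inter> (\<lambda>e. g ` e) ` SE m = {}"
proof -
  have False if e: "e \<in> SE m" and e': "e' \<in> SE m" and same: "f ` e = g ` e'" for e e'
  proof -
    obtain u v where uv: "e' = {u, v}" "u \<noteq> v" "u \<in> SV m" "v \<in> SV m"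
      using SE_pair[OF e'] by blast
    have end_shared: "x = shared" if "x \<in> e'" for x
    proof -
      have "g x \<in> f ` e" using same that by blast
      then obtain p where "p \<in> e" "f p = g x" by (rule imageE) simp
      then show "x = shared" using assms SE_subset[OF e] SE_subset[OF e'] that by blast
    qed
    then show False using end_shared[of u] end_shared[of v] uv(1,2) by simp
  qed
  then show ?thesis by blast
qed

lemma SE_copies_disjoint:
  "(\<lambda>e. up m ` e) ` SE m \<inter> SE m = {}"
  "(\<lambda>e. up m ` e) ` SE m \<inter> (\<lambda>e. right m ` e) ` SE m = {}"
  "SE m \<inter> (\<lambda>e. right m ` e) ` SE m = {}"
proof -
  have "(\<lambda>e. up m ` e) ` SE m \<inter> (\<lambda>e. (\<lambda>x. x) ` e) ` SE m = {}"
    by (rule edge_images_disjoint[where shared = "(0, 2 ^ m)"]) (use overlap_up_mid in blast)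
  then show "(\<lambda>e. up m ` e) ` SE m \<inter> SE m = {}" by simp
  show "(\<lambda>e. up m ` e) ` SE m \<inter> (\<lambda>e. right m ` e) ` SE m = {}"
    by (rule edge_images_disjoint[where shared = "(0, 2 ^ m)"]) (metis overlap_right_up)
  have "(\<lambda>e. (\<lambda>x. x) ` e) ` SE m \<inter> (\<lambda>e. right m ` e) ` SE m = {}"
    by (rule edge_images_disjoint[where shared = "(0, 0)"]) (use overlap_right_mid in blast)
  then show "SE m \<inter> (\<lambda>e. right m ` e) ` SE m = {}" by simp
qed

text \<open>Gamma_(m+1) is connected: a configuration making every edge monochrome is
  constant on the vertex set.\<close>
lemma SV_cluster_const:
  "\<forall>e\<in>SE m. monochrome \<sigma> e \<Longrightarrow> p \<in> SV m \<Longrightarrow> \<sigma> p = \<sigma> (0, 0)"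
proof (induction m arbitrary: \<sigma> p)
  case 0
  then have "\<sigma> (0, 1) = \<sigma> (0, 0)" "\<sigma> (1, 0) = \<sigma> (0, 0)" by (auto simp: monochrome_pair)
  then show ?case using 0(2) by auto
next
  case (Suc m)
  have copies: "\<forall>e\<in>SE m. monochrome (\<sigma> \<circ> up m) e" "\<forall>e\<in>SE m. monochrome \<sigma> e"
    "\<forall>e\<in>SE m. monochrome (\<sigma> \<circ> right m) e"
    using Suc.prems(1) unfolding SE_Suc by (auto simp flip: monochrome_image)
  have corners: "\<sigma> (0, 2 ^ m) = \<sigma> (0, 0)" "\<sigma> (2 ^ m, 0) = \<sigma> (0, 0)"
    using Suc.IH[OF copies(2)] SV_corners by blast+
  from Suc.prems(2) show ?case
  proof (cases rule: SV_SucE)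
    case (up q) then show ?thesis using Suc.IH[OF copies(1) up(1)] corners by simp
  next
    case mid then show ?thesis using Suc.IH[OF copies(2) mid] by simp
  next
    case (right q) then show ?thesis using Suc.IH[OF copies(3) right(1)] corners by simp
  qed
qed

text \<open>Consequently Gamma_(m+1) has exactly one component: its cluster configurations are
  the two constant ones.\<close>
lemma ncomp_SV: "ncomp (SV m) (SE m) = 1"
proof -
  let ?const = "\<lambda>b p. p \<in> SV m \<and> b"
  have "cluster_spins (SV m) (SE m) = range ?const"
  proof
    show "cluster_spins (SV m) (SE m) \<subseteq> range ?const"
    proof
      fix \<sigma> assume "\<sigma> \<in> cluster_spins (SV m) (SE m)"
      then have "\<sigma> = ?const (\<sigma> (0, 0))"
        using SV_cluster_const spins_off by (fastforce simp: cluster_spins_def)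
      then show "\<sigma> \<in> range ?const" by blast
    qed
    show "range ?const \<subseteq> cluster_spins (SV m) (SE m)"
      by (auto simp: cluster_spins_def spins_def monochrome_def dest: SE_subset)
  qed
  moreover have "inj ?const" using SV_corners(2) by (auto simp: inj_def fun_eq_iff)
  ultimately have "card (cluster_spins (SV m) (SE m)) = 2"
    by (simp add: card_image)
  then have "(2::nat) ^ ncomp (SV m) (SE m) = 2 ^ 1"
    using card_cluster_spins[OF conjunct1[OF finite_SV_SE] graph_edges_SE] by simp
  then show ?thesis by (simp only: power_inject_exp one_less_numeral_iff semiring_norm(76))
qed

lemma ising_weight_SE_Suc:
  "ising_weight K (SE (Suc m)) \<sigma>
     = ising_weight K (SE m) (\<sigma> \<circ> up m) * ising_weight K (SE m) \<sigma> * ising_weight K (SE m) (\<sigma> \<circ> right m)"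
proof -
  have fin: "finite (SE m)" using finite_SV_SE by blast
  have copy: "(\<Prod>e\<in>(\<lambda>e. f ` e) ` SE m. edge_weight K \<sigma> e) = ising_weight K (SE m) (\<sigma> \<circ> f)"
    if "inj f" for f
  proof -
    have "inj_on (\<lambda>e. f ` e) (SE m)" using that by (auto simp: inj_on_def inj_image_eq_iff)
    then show ?thesis
      by (simp add: prod.reindex ising_weight_def edge_weight_def monochrome_image)
  qed
  show ?thesis
    unfolding ising_weight_def[of K "SE (Suc m)"] SE_Suc
    using fin SE_copies_disjoint[of m]
    by (simp add: prod.union_disjoint Int_Un_distrib2 copy[OF inj_shiftp] ising_weight_def)
qed

section \<open>Partition functions with prescribed corner spins\<close>

type_synonym config = "int \<times> int \<Rightarrow> bool"

text \<open>Configurations on Gamma_(m+1) with spins a, b, c at the top, left and right corner.\<close>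
definition corner_spins :: "nat \<Rightarrow> bool \<Rightarrow> bool \<Rightarrow> bool \<Rightarrow> config set" where
  "corner_spins m a b c = {\<sigma>\<in>spins (SV m). \<sigma> (0, 2 ^ m) = a \<and> \<sigma> (0, 0) = b \<and> \<sigma> (2 ^ m, 0) = c}"

definition Zcorner :: "real \<Rightarrow> nat \<Rightarrow> bool \<Rightarrow> bool \<Rightarrow> bool \<Rightarrow> real" where
  "Zcorner K m a b c = (\<Sum>\<sigma>\<in>corner_spins m a b c. ising_weight K (SE m) \<sigma>)"

text \<open>Triples of configurations on Gamma_(m+1) that agree at the identified corners
  and have the prescribed outer corners: the configurations on Gamma_(m+2).\<close>
definition glued_triples :: "nat \<Rightarrow> bool \<Rightarrow> bool \<Rightarrow> bool \<Rightarrow> (config \<times> config \<times> config) set" where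
  "glued_triples m a b c = {(s1, s2, s3). s1 \<in> spins (SV m) \<and> s2 \<in> spins (SV m) \<and> s3 \<in> spins (SV m) \<and>
      s1 (0, 2 ^ m) = a \<and> s2 (0, 0) = b \<and> s3 (2 ^ m, 0) = c \<and>
      s1 (0, 0) = s2 (0, 2 ^ m) \<and> s1 (2 ^ m, 0) = s3 (0, 2 ^ m) \<and> s2 (2 ^ m, 0) = s3 (0, 0)}"

definition restrict_SV :: "nat \<Rightarrow> config \<Rightarrow> config" where
  "restrict_SV m \<sigma> p = (p \<in> SV m \<and> \<sigma> p)"

definition decompose :: "nat \<Rightarrow> config \<Rightarrow> config \<times> config \<times> config" where
  "decompose m \<sigma> = (restrict_SV m (\<sigma> \<circ> up m), restrict_SV m \<sigma>, restrict_SV m (\<sigma> \<circ> right m))"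

definition glue :: "nat \<Rightarrow> config \<Rightarrow> config \<Rightarrow> config \<Rightarrow> config" where
  "glue m s1 s2 s3 p =
     (if p \<in> SV m then s2 p
      else if p \<in> up m ` SV m then s1 (fst p, snd p - 2 ^ m)
      else if p \<in> right m ` SV m then s3 (fst p - 2 ^ m, snd p) else False)"

lemma ising_weight_restrict: "ising_weight K (SE m) (restrict_SV m \<sigma>) = ising_weight K (SE m) \<sigma>"
  unfolding ising_weight_def
proof (rule prod.cong[OF refl])
  fix e assume "e \<in> SE m"
  then have "monochrome (restrict_SV m \<sigma>) e = monochrome \<sigma> e"
    using SE_subset unfolding monochrome_def restrict_SV_def by blast
  then show "edge_weight K (restrict_SV m \<sigma>) e = edge_weight K \<sigma> e"
    by (simp add: edge_weight_def)
qed

lemma restrict_SV_eqI: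
  assumes "s \<in> spins (SV m)" "\<And>q. q \<in> SV m \<Longrightarrow> \<tau> q = s q"
  shows "restrict_SV m \<tau> = s"
proof
  fix q show "restrict_SV m \<tau> q = s q"
    using assms spins_off[OF assms(1), of q] unfolding restrict_SV_def by (cases "q \<in> SV m") simp_all
qed

lemma glue_mid: "q \<in> SV m \<Longrightarrow> glue m s1 s2 s3 q = s2 q"
  by (simp add: glue_def)

lemma glue_up:
  assumes "q \<in> SV m" "s1 (0, 0) = s2 (0, 2 ^ m)"
  shows "glue m s1 s2 s3 (up m q) = s1 q"
proof (cases "up m q \<in> SV m")
  case True
  then show ?thesis using overlap_up_mid[OF assms(1) True] assms(2) by (simp add: glue_def)
next
  case False
  have "up m q \<in> up m ` SV m" using assms(1) by (rule imageI)
  moreover have "(fst (up m q), snd (up m q) - 2 ^ m) = q" by (simp add: shiftp_def)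
  ultimately show ?thesis using False by (simp add: glue_def)
qed

lemma glue_right:
  assumes "q \<in> SV m" "s1 (2 ^ m, 0) = s3 (0, 2 ^ m)" "s2 (2 ^ m, 0) = s3 (0, 0)"
  shows "glue m s1 s2 s3 (right m q) = s3 q"
proof -
  consider (mid) "right m q \<in> SV m" | (up) q' where "q' \<in> SV m" "right m q = up m q'"
    | (right) "right m q \<notin> SV m" "right m q \<notin> up m ` SV m" by blast
  then show ?thesis
  proof cases
    case mid
    then show ?thesis using overlap_right_mid[OF assms(1) mid] assms(3) by (simp add: glue_def)
  next
    case up
    have q: "q = (0, 2 ^ m)" "q' = (2 ^ m, 0)" using overlap_right_up[OF assms(1) up] by simp_all
    have "right m q \<notin> SV m" using overlap_right_mid[OF assms(1)] q(1) by force
    moreover have "right m q \<in> up m ` SV m" using up by simp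
    moreover have "(fst (right m q), snd (right m q) - 2 ^ m) = q'"
      unfolding up(2) by (simp add: shiftp_def)
    ultimately show ?thesis using assms(2) q by (simp add: glue_def)
  next
    case right
    have "right m q \<in> right m ` SV m" using assms(1) by (rule imageI)
    moreover have "(fst (right m q) - 2 ^ m, snd (right m q)) = q" by (simp add: shiftp_def)
    ultimately show ?thesis using right by (simp add: glue_def)
  qed
qed

lemma decompose_glue:
  assumes "(s1, s2, s3) \<in> glued_triples m a b c"
  shows "glue m s1 s2 s3 \<in> corner_spins (Suc m) a b c" "decompose m (glue m s1 s2 s3) = (s1, s2, s3)"
proof -
  note t = assms[unfolded glued_triples_def, simplified]
  let ?\<sigma> = "glue m s1 s2 s3"
  have on_copies: "\<And>q. q \<in> SV m \<Longrightarrow> ?\<sigma> (up m q) = s1 q" "\<And>q. q \<in> SV m \<Longrightarrow> ?\<sigma> q = s2 q"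
    "\<And>q. q \<in> SV m \<Longrightarrow> ?\<sigma> (right m q) = s3 q"
    using glue_up glue_mid glue_right t by auto
  have "?\<sigma> \<in> spins (SV (Suc m))" unfolding spins_def glue_def SV_Suc by auto
  moreover have "?\<sigma> (0, 2 ^ Suc m) = a"
    using on_copies(1)[OF SV_corners(1)] t by simp
  moreover have "?\<sigma> (0, 0) = b" using on_copies(2)[OF SV_corners(2)] t by simp
  moreover have "?\<sigma> (2 ^ Suc m, 0) = c"
    using on_copies(3)[OF SV_corners(3)] t by simp
  ultimately show "?\<sigma> \<in> corner_spins (Suc m) a b c" by (simp add: corner_spins_def)
  show "decompose m ?\<sigma> = (s1, s2, s3)"
    unfolding decompose_def using on_copies t by (simp add: restrict_SV_eqI)
qed

lemma decompose_bij: "bij_betw (decompose m) (corner_spins (Suc m) a b c) (glued_triples m a b c)"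
proof -
  have into: "decompose m \<sigma> \<in> glued_triples m a b c" if \<sigma>: "\<sigma> \<in> corner_spins (Suc m) a b c" for \<sigma>
  proof -
    have "(2::int) ^ Suc m = 2 ^ m + 2 ^ m" by simp
    then have "\<sigma> (0, 2 ^ m + 2 ^ m) = a" "\<sigma> (0, 0) = b" "\<sigma> (2 ^ m + 2 ^ m, 0) = c"
      using \<sigma> by (simp_all add: corner_spins_def)
    then show ?thesis
      unfolding decompose_def glued_triples_def using SV_corners[of m]
      by (simp add: restrict_SV_def spins_def)
  qed
  have inj: "inj_on (decompose m) (corner_spins (Suc m) a b c)"
  proof (rule inj_onI)
    fix \<sigma> \<tau> assume in_C: "\<sigma> \<in> corner_spins (Suc m) a b c" "\<tau> \<in> corner_spins (Suc m) a b c"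
      and same_cut: "decompose m \<sigma> = decompose m \<tau>"
    have agree: "g q = h q" if "restrict_SV m g = restrict_SV m h" "q \<in> SV m" for g h :: config and q
      using fun_cong[OF that(1), of q] that(2) unfolding restrict_SV_def by simp
    have copies: "restrict_SV m (\<sigma> \<circ> up m) = restrict_SV m (\<tau> \<circ> up m)"
      "restrict_SV m \<sigma> = restrict_SV m \<tau>"
      "restrict_SV m (\<sigma> \<circ> right m) = restrict_SV m (\<tau> \<circ> right m)"
      using same_cut unfolding decompose_def by simp_all
    have spins: "\<sigma> \<in> spins (SV (Suc m))" "\<tau> \<in> spins (SV (Suc m))"
      using in_C unfolding corner_spins_def by blast+
    have "\<sigma> p = \<tau> p" for p
    proof (cases "p \<in> SV (Suc m)")
      case True
      then show ?thesis
      proof (cases rule: SV_SucE)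
        case (up q) then show ?thesis using agree[OF copies(1) up(1)] by simp
      next
        case mid then show ?thesis using agree[OF copies(2) mid] by simp
      next
        case (right q) then show ?thesis using agree[OF copies(3) right(1)] by simp
      qed
    next
      case False
      then show ?thesis using spins_off[OF spins(1) False] spins_off[OF spins(2) False] by simp
    qed
    then show "\<sigma> = \<tau>" by (rule ext)
  qed
  have onto: "t \<in> decompose m ` corner_spins (Suc m) a b c" if t: "t \<in> glued_triples m a b c" for t
  proof -
    obtain s1 s2 s3 where t_eq: "t = (s1, s2, s3)" by (rule prod_cases3)
    show ?thesis
      unfolding t_eq using decompose_glue[OF t[unfolded t_eq]] by (metis image_eqI)
  qed
  from into inj onto show ?thesis unfolding bij_betw_def by blast
qed

lemma sum_product3:
  fixes f :: "'a \<Rightarrow> real" and g :: "'b \<Rightarrow> real" and h :: "'c \<Rightarrow> real"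
  shows "(\<Sum>(x, y, z)\<in>A \<times> B \<times> C. f x * g y * h z) = sum f A * sum g B * sum h C"
proof -
  have "(\<Sum>(x, y, z)\<in>A \<times> B \<times> C. f x * g y * h z) = (\<Sum>x\<in>A. \<Sum>y\<in>B. \<Sum>z\<in>C. f x * (g y * h z))"
    by (simp add: sum.cartesian_product' mult.assoc)
  also have "\<dots> = (\<Sum>x\<in>A. f x * (\<Sum>y\<in>B. g y * sum h C))"
    by (simp add: sum_distrib_left)
  also have "\<dots> = sum f A * sum g B * sum h C"
    by (simp only: sum_distrib_right[symmetric] mult.assoc)
  finally show ?thesis .
qed

text \<open>The basic recursion: the corner partition function of Gamma_(m+2) is a sum over
  the spins x1, x2, x3 at the three glued corners.\<close>
lemma Zcorner_Suc:
  "Zcorner K (Suc m) a b c = (\<Sum>(x1, x2, x3)\<in>UNIV.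
      Zcorner K m a x1 x2 * Zcorner K m x1 b x3 * Zcorner K m x2 x3 c)"
proof -
  let ?W = "ising_weight K (SE m)"
  define F :: "config \<times> config \<times> config \<Rightarrow> real"
    where "F = (\<lambda>(s1, s2, s3). ?W s1 * ?W s2 * ?W s3)"
  define glued_corners :: "config \<times> config \<times> config \<Rightarrow> bool \<times> bool \<times> bool"
    where "glued_corners = (\<lambda>(s1, s2, s3). (s1 (0, 0), s1 (2 ^ m, 0), s2 (2 ^ m, 0)))"
  have fin_spins: "finite (spins (SV m))" using finite_SV_SE finite_spins by blast
  have fin: "finite (glued_triples m a b c)"
    by (rule finite_subset[of _ "spins (SV m) \<times> spins (SV m) \<times> spins (SV m)"])
      (auto simp: glued_triples_def fin_spins)
  have fibre: "{t \<in> glued_triples m a b c. glued_corners t = (x1, x2, x3)}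
      = corner_spins m a x1 x2 \<times> corner_spins m x1 b x3 \<times> corner_spins m x2 x3 c" for x1 x2 x3
    by (auto simp: glued_triples_def corner_spins_def glued_corners_def)
  have "Zcorner K (Suc m) a b c = (\<Sum>\<sigma>\<in>corner_spins (Suc m) a b c. F (decompose m \<sigma>))"
    unfolding Zcorner_def F_def decompose_def prod.case ising_weight_restrict
    by (rule sum.cong[OF refl], rule ising_weight_SE_Suc)
  also have "\<dots> = sum F (glued_triples m a b c)"
    by (rule sum.reindex_bij_betw[OF decompose_bij])
  also have "\<dots> = (\<Sum>x\<in>UNIV. sum F {t \<in> glued_triples m a b c. glued_corners t = x})"
    by (rule sum.group[symmetric]) (simp_all add: fin)
  also have "\<dots> = (\<Sum>(x1, x2, x3)\<in>UNIV.
      Zcorner K m a x1 x2 * Zcorner K m x1 b x3 * Zcorner K m x2 x3 c)"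
    unfolding F_def Zcorner_def
    by (intro sum.cong refl) (simp add: fibre sum_product3 split: prod.split)
  finally show ?thesis .
qed

section \<open>Solving the recursion\<close>

text \<open>By the symmetry of Gamma_n only two corner partition functions occur: A (all
  corners equal) and B (corners not all equal); they satisfy a cubic recursion.\<close>
fun corner_pair :: "real \<Rightarrow> nat \<Rightarrow> real \<times> real" where
  "corner_pair K 0 = (exp K ^ 3, exp (- K))"
| "corner_pair K (Suc m) = (case corner_pair K m of (A, B) \<Rightarrow>
      (A ^ 3 + 3 * A * B ^ 2 + 4 * B ^ 3, A ^ 2 * B + 4 * A * B ^ 2 + 3 * B ^ 3))"

definition corner_value :: "real \<Rightarrow> nat \<Rightarrow> bool \<Rightarrow> bool \<Rightarrow> bool \<Rightarrow> real" where
  "corner_value K m a b c = (if a = b \<and> b = c then fst (corner_pair K m) else snd (corner_pair K m))"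

text \<open>For the triangle Gamma_1 the corner spins determine the configuration.\<close>
lemma Zcorner_0: "Zcorner K 0 a b c = corner_value K 0 a b c"
proof -
  define \<sigma> where "\<sigma> = (\<lambda>p::int \<times> int. p = (0, 1) \<and> a \<or> p = (0, 0) \<and> b \<or> p = (1, 0) \<and> c)"
  have unique: "\<tau> = \<sigma>" if \<tau>: "\<tau> \<in> corner_spins 0 a b c" for \<tau>
  proof
    fix p
    show "\<tau> p = \<sigma> p"
    proof (cases "p \<in> SV 0")
      case True
      have corners: "\<tau> (0, 1) = a" "\<tau> (0, 0) = b" "\<tau> (1, 0) = c"
        using \<tau> by (simp_all add: corner_spins_def)
      from True consider "p = (0, 1)" | "p = (0, 0)" | "p = (1, 0)" by auto
      then show ?thesis using corners by cases (simp_all add: \<sigma>_def)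
    next
      case False
      have "\<tau> \<in> spins (SV 0)" using \<tau> unfolding corner_spins_def by blast
      then have "\<not> \<tau> p" using False by (rule spins_off)
      moreover have "\<not> \<sigma> p" using False by (auto simp: \<sigma>_def)
      ultimately show ?thesis by simp
    qed
  qed
  have "\<sigma> \<in> corner_spins 0 a b c" by (auto simp: corner_spins_def spins_def \<sigma>_def)
  with unique have "corner_spins 0 a b c = {\<sigma>}" by blast
  then have "Zcorner K 0 a b c = edge_weight K \<sigma> {(0, 1), (0, 0)}
      * (edge_weight K \<sigma> {(0, 1), (1, 0)} * edge_weight K \<sigma> {(0, 0), (1, 0)})"
    by (simp add: Zcorner_def ising_weight_def doubleton_eq_iff)
  also have "\<dots> = corner_value K 0 a b c"
    unfolding edge_weight_def monochrome_pair \<sigma>_def corner_value_def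
    by (cases a; cases b; cases c) (simp_all add: power3_eq_cube exp_minus field_simps)
  finally show ?thesis .
qed

lemma Zcorner_closed: "Zcorner K m a b c = corner_value K m a b c"
proof (induction m arbitrary: a b c)
  case 0 then show ?case by (rule Zcorner_0)
next
  case (Suc m)
  obtain A B where "corner_pair K m = (A, B)" by fastforce
  then show ?case
    unfolding Zcorner_Suc Suc.IH UNIV_bool UNIV_Times_UNIV[symmetric] corner_value_def
    by (cases a; cases b; cases c) (simp_all add: power2_eq_square power3_eq_cube algebra_simps)
qed

text \<open>Summing over the eight corner patterns gives the Ising partition function.\<close>
lemma ising_partition_SV:
  "(\<Sum>\<sigma>\<in>spins (SV m). ising_weight K (SE m) \<sigma>) = 2 * fst (corner_pair K m) + 6 * snd (corner_pair K m)"
proof -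
  define corners where "corners = (\<lambda>\<sigma>::config. (\<sigma> (0, 2 ^ m), \<sigma> (0, 0), \<sigma> (2 ^ m, 0)))"
  have fibre: "{\<sigma> \<in> spins (SV m). corners \<sigma> = (a, b, c)} = corner_spins m a b c" for a b c
    by (auto simp: corners_def corner_spins_def)
  have "(\<Sum>\<sigma>\<in>spins (SV m). ising_weight K (SE m) \<sigma>)
      = (\<Sum>x\<in>UNIV. \<Sum>\<sigma>\<in>{\<sigma> \<in> spins (SV m). corners \<sigma> = x}. ising_weight K (SE m) \<sigma>)"
    using finite_SV_SE finite_spins by (intro sum.group[symmetric]) auto
  also have "\<dots> = (\<Sum>(a, b, c)\<in>UNIV. Zcorner K m a b c)"
    by (intro sum.cong) (auto simp: fibre Zcorner_def)
  finally show ?thesis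
    unfolding Zcorner_closed UNIV_bool UNIV_Times_UNIV[symmetric] corner_value_def by simp
qed

section \<open>The closed form in terms of cosh and tanh\<close>

text \<open>vcount n = (3^n + 3)/2 is the number of vertices of Gamma_n; the theorem has
  2^vcount n as a factor.\<close>
definition vcount :: "nat \<Rightarrow> nat" where "vcount n = (3 ^ n + 3) div 2"

lemma vcount_Suc: "vcount (Suc n) + 3 = 3 * vcount n"
proof -
  have "odd ((3::nat) ^ n)" by simp
  then obtain j where j: "(3::nat) ^ n = 2 * j + 1" by (rule oddE)
  then have "(3::nat) ^ Suc n = 6 * j + 3" by simp
  then show ?thesis unfolding vcount_def using j by simp
qed

lemma two_pow_vcount_Suc: "((2::real) ^ vcount n) ^ 3 = 8 * 2 ^ vcount (Suc n)"
proof -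
  have "((2::real) ^ vcount n) ^ 3 = 2 ^ (3 * vcount n)" by (simp add: power_mult[symmetric] mult.commute)
  also have "\<dots> = 2 ^ (vcount (Suc n) + 3)" unfolding vcount_Suc ..
  finally show ?thesis by (simp add: power_add)
qed

definition Phi_prefix :: "nat \<Rightarrow> real \<Rightarrow> real" where
  "Phi_prefix n z = z powr (real (3 ^ n) / 2) * (\<Prod>k = 1..n. phi k z ^ (3 ^ (n - k)))"

lemma Phi_eq_prefix: "Phi n z = Phi_prefix n z * (phi (n + 1) z - 1)"
  by (simp add: Phi_def Phi_prefix_def)

lemma Phi_prefix_1: "z > 0 \<Longrightarrow> Phi_prefix 1 z = z * (z + 1)"
proof -
  assume z: "z > 0"
  have "z powr (3 / 2) = z * sqrt z"
    using z powr_add[of z 1 "1/2"] by (simp add: powr_half_sqrt)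
  then show ?thesis using z unfolding Phi_prefix_def by (simp add: field_simps)
qed

lemma Phi_prefix_Suc:
  assumes "z > 0"
  shows "Phi_prefix (Suc n) z = Phi_prefix n z ^ 3 * phi (Suc n) z"
proof -
  have powr: "z powr (real (3 ^ Suc n) / 2) = (z powr (real (3 ^ n) / 2)) ^ 3"
    using assms by (simp add: powr_power)
  have last: "(\<Prod>k = 1..Suc n. phi k z ^ (3 ^ (Suc n - k)))
      = phi (Suc n) z * (\<Prod>k = 1..n. phi k z ^ (3 ^ (Suc n - k)))"
    by (simp add: prod.cl_ivl_Suc mult.commute)
  have cube: "(\<Prod>k = 1..n. phi k z ^ (3 ^ (Suc n - k))) = (\<Prod>k = 1..n. phi k z ^ (3 ^ (n - k))) ^ 3"
    unfolding prod_power_distrib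
  proof (rule prod.cong[OF refl])
    fix k assume "k \<in> {1..n}"
    then have "Suc n - k = Suc (n - k)" by auto
    then show "phi k z ^ 3 ^ (Suc n - k) = (phi k z ^ 3 ^ (n - k)) ^ 3"
      by (simp add: power_mult[symmetric] mult.commute)
  qed
  show ?thesis unfolding Phi_prefix_def powr last cube by (simp add: power_mult_distrib mult_ac)
qed

text \<open>The invariant relating (A, B) to Phi: 2(A - B) is the prefix part and
  A + 3B = (A - B)(phi - 1).  The induction step is pure algebra: A' - B' = (A - B)^2 (A + B)
  and A' + 3B' = (A + B)((A + 3B)^2 - (A + 3B)(A - B) + (A - B)^2).\<close>
lemma corner_invariant_step:
  fixes A B E c P ph :: real
  assumes diff: "2 * (A - B) = E * c * P" and sum: "A + 3 * B = (A - B) * (ph - 1)"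
  defines "A' \<equiv> A ^ 3 + 3 * A * B ^ 2 + 4 * B ^ 3" and "B' \<equiv> A ^ 2 * B + 4 * A * B ^ 2 + 3 * B ^ 3"
  shows "8 * (2 * (A' - B')) = E ^ 3 * c ^ 3 * (P ^ 3 * ph)"
    and "A' + 3 * B' = (A' - B') * ((ph ^ 2 - 3 * ph + 4) - 1)"
proof -
  define D where "D = A - B"
  have AB: "A + B = D * ph / 2" using sum unfolding D_def by (simp add: algebra_simps)
  have D': "A' - B' = D ^ 2 * (A + B)"
    unfolding A'_def B'_def D_def by (simp add: power2_eq_square power3_eq_cube algebra_simps)
  have S': "A' + 3 * B' = (A + B) * ((A + 3 * B) ^ 2 - (A + 3 * B) * D + D ^ 2)"
    unfolding A'_def B'_def D_def by (simp add: power2_eq_square power3_eq_cube algebra_simps)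
  have "8 * (2 * (A' - B')) = (2 * D) ^ 3 * ph"
    unfolding D' AB by (simp add: power2_eq_square power3_eq_cube)
  then show "8 * (2 * (A' - B')) = E ^ 3 * c ^ 3 * (P ^ 3 * ph)"
    unfolding D_def diff by (simp add: power_mult_distrib)
  show "A' + 3 * B' = (A' - B') * ((ph ^ 2 - 3 * ph + 4) - 1)"
    unfolding S' D' sum D_def[symmetric] by (simp add: power2_eq_square algebra_simps)
qed

text \<open>The base case, written in terms of u = e^K, for which cosh K = (u^2 + 1)/(2u),
  tanh K = (u^2 - 1)/(u^2 + 1), A = u^3 and B = 1/u.\<close>
lemma corner_invariant_base:
  fixes u :: real assumes u: "u > 1"
  defines "t \<equiv> (u\<^sup>2 - 1) / (u\<^sup>2 + 1)" and "c \<equiv> (u\<^sup>2 + 1) / (2 * u)"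
  shows "2 * (u ^ 3 - 1 / u) = 2 ^ 3 * c ^ 3 * (t * (t + 1))"
    and "u ^ 3 + 3 / u = (u ^ 3 - 1 / u) * ((t\<^sup>2 + 1) / t - 1)"
proof -
  have pos: "u\<^sup>2 + 1 > 0" "u\<^sup>2 - 1 > 0" using u by (simp_all add: add_pos_nonneg one_less_power)
  define a b where "a = u\<^sup>2 - 1" and "b = u\<^sup>2 + 1"
  have ab: "a * b = u ^ 4 - 1"
    unfolding a_def b_def by (simp add: power2_eq_square power4_eq_xxxx algebra_simps)
  have b: "b > 0" using pos by (simp add: b_def)
  have "t + 1 = 2 * u\<^sup>2 / b" using b unfolding t_def a_def[symmetric] b_def[symmetric]
    by (simp add: field_simps a_def b_def)
  then have "2 ^ 3 * c ^ 3 * (t * (t + 1)) = 2 * (a * b) / u"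
    using u b unfolding c_def t_def a_def[symmetric] b_def[symmetric]
    by (simp add: field_simps power2_eq_square power3_eq_cube)
  also have "\<dots> = 2 * (u ^ 3 - 1 / u)"
    unfolding ab using u by (simp add: field_simps power4_eq_xxxx power3_eq_cube)
  finally show "2 * (u ^ 3 - 1 / u) = 2 ^ 3 * c ^ 3 * (t * (t + 1))" by simp
  have a: "a > 0" using pos by (simp add: a_def)
  have "(t\<^sup>2 + 1) / t - 1 = (a\<^sup>2 - a * b + b\<^sup>2) / (a * b)"
    using a b unfolding t_def a_def[symmetric] b_def[symmetric]
    by (simp add: field_simps power2_eq_square)
  also have "a\<^sup>2 - a * b + b\<^sup>2 = u ^ 4 + 3"
    unfolding a_def b_def by (simp add: power2_eq_square power4_eq_xxxx algebra_simps)
  also note ab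
  finally have "(t\<^sup>2 + 1) / t - 1 = (u ^ 4 + 3) / (u ^ 4 - 1)" .
  moreover have "u ^ 4 - 1 > 0" using u by (simp add: one_less_power)
  ultimately show "u ^ 3 + 3 / u = (u ^ 3 - 1 / u) * ((t\<^sup>2 + 1) / t - 1)"
    using u by (simp add: field_simps power4_eq_xxxx power3_eq_cube)
qed

lemma cosh_tanh_exp:
  fixes K :: real
  shows "cosh K = (exp K ^ 2 + 1) / (2 * exp K)" "tanh K = (exp K ^ 2 - 1) / (exp K ^ 2 + 1)"
proof -
  have pos: "0 < exp K" "0 < 1 + exp K * exp K" "0 < exp K + exp K * (exp K * exp K)"
    by (simp_all add: add_pos_pos)
  show "cosh K = (exp K ^ 2 + 1) / (2 * exp K)"
    using pos by (simp add: cosh_field_def exp_minus field_simps power2_eq_square)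
  show "tanh K = (exp K ^ 2 - 1) / (exp K ^ 2 + 1)"
    using pos by (simp add: tanh_altdef exp_minus field_simps power2_eq_square)
qed

lemma corner_invariant:
  assumes K: "K > 0"
  shows "case corner_pair K m of (A, B) \<Rightarrow>
           2 * (A - B) = 2 ^ vcount (Suc m) * cosh K ^ 3 ^ Suc m * Phi_prefix (Suc m) (tanh K)
         \<and> A + 3 * B = (A - B) * (phi (Suc m + 1) (tanh K) - 1)"
proof (induction m)
  case 0
  define u where "u = exp K"
  have u: "u > 1" unfolding u_def using K by simp
  have ch: "cosh K = (u\<^sup>2 + 1) / (2 * u)" "tanh K = (u\<^sup>2 - 1) / (u\<^sup>2 + 1)"
    unfolding u_def by (rule cosh_tanh_exp)+
  have t: "tanh K > 0" using K by simp
  have AB: "corner_pair K 0 = (u ^ 3, 1 / u)" by (simp add: u_def exp_minus inverse_eq_divide)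
  have "2 * (u ^ 3 - 1 / u) = 2 ^ vcount 1 * cosh K ^ 3 ^ 1 * Phi_prefix 1 (tanh K)"
    using corner_invariant_base(1)[OF u] Phi_prefix_1[OF t] unfolding ch by (simp add: vcount_def)
  moreover have "phi (Suc 0 + 1) (tanh K) = (tanh K ^ 2 + 1) / tanh K" by (simp add: numeral_2_eq_2)
  then have "u ^ 3 + 3 * (1 / u) = (u ^ 3 - 1 / u) * (phi (Suc 0 + 1) (tanh K) - 1)"
    using corner_invariant_base(2)[OF u] unfolding ch by simp
  ultimately show ?case unfolding AB by simp
next
  case (Suc m)
  obtain A B where AB: "corner_pair K m = (A, B)" by fastforce
  have t: "tanh K > 0" using K by simp
  let ?E = "2 ^ vcount (Suc m) :: real" and ?c = "cosh K ^ 3 ^ Suc m"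
    and ?P = "Phi_prefix (Suc m) (tanh K)" and ?ph = "phi (Suc (Suc m)) (tanh K)"
  have diff: "2 * (A - B) = ?E * ?c * ?P" and sum: "A + 3 * B = (A - B) * (?ph - 1)"
    using Suc.IH AB by simp_all
  note step = corner_invariant_step[OF diff sum]
  have "?E ^ 3 = 8 * 2 ^ vcount (Suc (Suc m))" by (rule two_pow_vcount_Suc)
  moreover have "?c ^ 3 = cosh K ^ 3 ^ Suc (Suc m)"
    by (simp flip: power_mult add: mult.commute)
  moreover have "?P ^ 3 * ?ph = Phi_prefix (Suc (Suc m)) (tanh K)"
    using Phi_prefix_Suc[OF t, of "Suc m"] by simp
  moreover have "phi (Suc (Suc m) + 1) (tanh K) = ?ph ^ 2 - 3 * ?ph + 4" by simp
  ultimately show ?case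
    using step AB by (simp add: mult.assoc)
qed

lemma ising_partition_closed_form:
  assumes "K > 0"
  shows "(\<Sum>\<sigma>\<in>spins (SV m). ising_weight K (SE m) \<sigma>)
       = 2 ^ vcount (Suc m) * cosh K ^ 3 ^ Suc m * Phi (Suc m) (tanh K)"
proof -
  obtain A B where AB: "corner_pair K m = (A, B)" by fastforce
  then have diff: "2 * (A - B) = 2 ^ vcount (Suc m) * cosh K ^ 3 ^ Suc m * Phi_prefix (Suc m) (tanh K)"
    and sum: "A + 3 * B = (A - B) * (phi (Suc m + 1) (tanh K) - 1)"
    using corner_invariant[OF assms, of m] by simp_all
  have "(\<Sum>\<sigma>\<in>spins (SV m). ising_weight K (SE m) \<sigma>) = 2 * (A + 3 * B)"
    using ising_partition_SV AB by simp
  also have "\<dots> = 2 * (A - B) * (phi (Suc m + 1) (tanh K) - 1)"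
    unfolding sum by simp
  finally show ?thesis unfolding diff Phi_eq_prefix by (simp only: mult.assoc)
qed

theorem theorem3p12:
  fixes n :: nat and \<beta> J :: real
  assumes "n \<ge> 1" and "\<beta> > 0" and "J > 0"
  shows "2 * (exp (2 * \<beta> * J) - 1) ^ (card (sier_V n) - 1)
           * exp (- \<beta> * J * real (card (sier_E n)))
           * T_sier n ((exp (2 * \<beta> * J) + 1) / (exp (2 * \<beta> * J) - 1)) (exp (2 * \<beta> * J))
         = 2 ^ ((3 ^ n + 3) div 2) * cosh (\<beta> * J) ^ (3 ^ n) * Phi n (tanh (\<beta> * J))"
proof -
  obtain m where n: "n = Suc m" using assms(1) by (cases n) auto
  have K: "\<beta> * J > 0" using assms(2,3) by simp
  have "2 * (exp (2 * (\<beta> * J)) - 1) ^ (card (SV m) - 1) * exp (- (\<beta> * J) * real (card (SE m)))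
          * tutte (SV m) (SE m) ((exp (2 * (\<beta> * J)) + 1) / (exp (2 * (\<beta> * J)) - 1)) (exp (2 * (\<beta> * J)))
        = (\<Sum>\<sigma>\<in>spins (SV m). ising_weight (\<beta> * J) (SE m) \<sigma>)"
    using finite_SV_SE graph_edges_SE ncomp_SV K by (intro tutte_ising) auto
  also have "\<dots> = 2 ^ vcount (Suc m) * cosh (\<beta> * J) ^ 3 ^ Suc m * Phi (Suc m) (tanh (\<beta> * J))"
    by (rule ising_partition_closed_form[OF K])
  finally show ?thesis
    unfolding n T_sier_def vcount_def mult.assoc[of 2 \<beta> J] mult_minus_left[of \<beta> J] .
qed

end
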